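(* Let $(X,\mathbf R)$ be a symmetric association scheme with $D$ classes, metric with respect to $A_0,\dots,A_D$. Fix $x\in X$, let $T=T(x)$, let $\chi\in V$ be a code and set $\delta_x=\delta_x(\chi)$. Suppose $t\in\{1,\dots,D\}$ is such that $$|\{j\in W_s^*: E_j\chi\ne0\}|\le \delta_x-r(W)$$ for every irreducible $T$-module $W\subseteq V$ with $1\le r(W)\le t$. If every irreducible $T$-module in $V$ with endpoint at most $t$ is thin, then $F\chi$ is a relative $t$-codesign with respect to $x$ for every $F\in T$.
   Context: $(X,\mathbf R)$ is a symmetric association scheme with associate matrices $A_0=I,\dots,A_D$, Bose–Mesner algebra $M$, primitive idempotents $E_0=|X|^{-1}J,\dots,E_D$; metric means $(X,R_1)$ is distance-regular with $R_i$ its distance-$i$ relation. $V=\mathbb C^X$ with standard basis $\{\hat y\}$ and standard Hermitian inner product. $E_i^*(x)$ is diagonal with $(E_i^*(x))_{yy}=(A_i)_{xy}$; $A_i^*(x)$ is diagonal with $(A_i^*(x))_{yy}=|X|(E_i)_{xy}$; $T(x)$ is the algebra generated by $M$ and the $A_i^*(x)$. For an irreducible $T(x)$-module $W$: dual support $W_s^*=\{j:E_jW\ne0\}$, endpoint $r(W)=\min\{i:E_i^*(x)W\neq 0\}$, thin means $\dim E_i^*(x)W\le1$ for all $i$. A code is a vector $\chi\notin E_0V$ with $\chi\notin E_0^*(z)V$ for all $z\in X$. $\delta_x(\chi)=\min\{i\ne 0:E_i^*(x)\chi\ne0\}$. $\psi$ is a relative $t$-codesign with respect to $x$ if $E_i^*(x)\psi$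 and $A_i\hat x$ are linearly dependent for all $1\le i\le t$. *)

theory Defs
  imports "HOL-Analysis.Analysis"
begin

text \<open>The vertex set X is the finite type 'x (X = UNIV). V = complex ^ 'x, matrices are
complex ^ 'x ^ 'x. The scheme is given by R :: 'x => 'x => nat, where R y z = i means
(y,z) is in the i-th relation R_i.\<close>

definition adj :: "('x::finite \<Rightarrow> 'x \<Rightarrow> nat) \<Rightarrow> nat \<Rightarrow> complex^'x^'x" where
  "adj R i = (\<chi> y z. if R y z = i then 1 else 0)"

definition sym_assoc_scheme :: "('x::finite \<Rightarrow> 'x \<Rightarrow> nat) \<Rightarrow> nat \<Rightarrow> bool" where
  "sym_assoc_scheme R D \<longleftrightarrow>
     (\<forall>y z. R y z \<le> D) \<and>
     (\<forall>y z. R y z = 0 \<longleftrightarrow> y = z) \<and>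
     (\<forall>y z. R y z = R z y) \<and>
     (\<forall>i\<le>D. \<exists>y z. R y z = i) \<and>
     (\<forall>i\<le>D. \<forall>j\<le>D. \<forall>k\<le>D. \<exists>p. \<forall>y z. R y z = k \<longrightarrow>
         card {w. R y w = i \<and> R w z = j} = p)"

definition metric_scheme :: "('x::finite \<Rightarrow> 'x \<Rightarrow> nat) \<Rightarrow> bool" where
  "metric_scheme R \<longleftrightarrow>
     (\<forall>y z. (y, z) \<in> {(u, v). R u v = 1} ^^ (R y z) \<and>
            (\<forall>m < R y z. (y, z) \<notin> {(u, v). R u v = 1} ^^ m))"

definition bose_mesner :: "('x::finite \<Rightarrow> 'x \<Rightarrow> nat) \<Rightarrow> nat \<Rightarrow> (complex^'x^'x) set" where
  "bose_mesner R D = {M. \<exists>c. M = (\<chi> y z. \<Sum>j\<le>D. c j * adj R j $ y $ z)}"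

text \<open>E_0,...,E_D are the primitive idempotents of the Bose--Mesner algebra, with
E_0 = |X|^{-1} J: a complete system of D+1 nonzero pairwise orthogonal idempotents of M
(M has dimension D+1, so these are exactly the primitive idempotents).\<close>
definition primitive_idempotents ::
  "('x::finite \<Rightarrow> 'x \<Rightarrow> nat) \<Rightarrow> nat \<Rightarrow> (nat \<Rightarrow> complex^'x^'x) \<Rightarrow> bool" where
  "primitive_idempotents R D E \<longleftrightarrow>
     (\<forall>i\<le>D. E i \<in> bose_mesner R D \<and> E i \<noteq> 0) \<and>
     (\<forall>i\<le>D. \<forall>j\<le>D. E i ** E j = (if i = j then E i else 0)) \<and>
     (\<Sum>i\<le>D. E i) = mat 1 \<and>
     E 0 = (\<chi> y z. 1 / of_nat CARD('x))"

definition Estar :: "('x::finite \<Rightarrow> 'x \<Rightarrow> nat) \<Rightarrow> nat \<Rightarrow> 'x \<Rightarrow> complex^'x^'x" where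
  "Estar R i x = (\<chi> y z. if y = z then adj R i $ x $ y else 0)"

definition Astar :: "(nat \<Rightarrow> complex^'x::finite^'x) \<Rightarrow> nat \<Rightarrow> 'x \<Rightarrow> complex^'x^'x" where
  "Astar E i x = (\<chi> y z. if y = z then of_nat CARD('x) * E i $ x $ y else 0)"

inductive_set terwilliger ::
  "('x::finite \<Rightarrow> 'x \<Rightarrow> nat) \<Rightarrow> nat \<Rightarrow> (nat \<Rightarrow> complex^'x^'x) \<Rightarrow> 'x \<Rightarrow> (complex^'x^'x) set"
  for R D E x where
  gen_A: "i \<le> D \<Longrightarrow> adj R i \<in> terwilliger R D E x"
| gen_Astar: "i \<le> D \<Longrightarrow> Astar E i x \<in> terwilliger R D E x"
| add: "A \<in> terwilliger R D E x \<Longrightarrow> B \<in> terwilliger R D E x \<Longrightarrow> A + B \<in> terwilliger R D E x"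
| scale: "A \<in> terwilliger R D E x \<Longrightarrow> (\<chi> y z. c * A $ y $ z) \<in> terwilliger R D E x"
| mult: "A \<in> terwilliger R D E x \<Longrightarrow> B \<in> terwilliger R D E x \<Longrightarrow> A ** B \<in> terwilliger R D E x"

definition is_module :: "(complex^'x::finite^'x) set \<Rightarrow> (complex^'x) set \<Rightarrow> bool" where
  "is_module T W \<longleftrightarrow> vec.subspace W \<and> (\<forall>F\<in>T. \<forall>w\<in>W. F *v w \<in> W)"

definition irreducible_module :: "(complex^'x::finite^'x) set \<Rightarrow> (complex^'x) set \<Rightarrow> bool" where
  "irreducible_module T W \<longleftrightarrow> is_module T W \<and> W \<noteq> {0} \<and>
     (\<forall>U. is_module T U \<and> U \<subseteq> W \<longrightarrow> U = {0} \<or> U = W)"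

definition dual_support :: "nat \<Rightarrow> (nat \<Rightarrow> complex^'x::finite^'x) \<Rightarrow> (complex^'x) set \<Rightarrow> nat set" where
  "dual_support D E W = {j. j \<le> D \<and> (\<exists>w\<in>W. E j *v w \<noteq> 0)}"

definition endpoint :: "('x::finite \<Rightarrow> 'x \<Rightarrow> nat) \<Rightarrow> 'x \<Rightarrow> (complex^'x) set \<Rightarrow> nat" where
  "endpoint R x W = (LEAST i. \<exists>w\<in>W. Estar R i x *v w \<noteq> 0)"

definition thin :: "('x::finite \<Rightarrow> 'x \<Rightarrow> nat) \<Rightarrow> 'x \<Rightarrow> (complex^'x) set \<Rightarrow> bool" where
  "thin R x W \<longleftrightarrow> (\<forall>i. vec.dim ((\<lambda>w. Estar R i x *v w) ` W) \<le> 1)"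

definition is_code ::
  "('x::finite \<Rightarrow> 'x \<Rightarrow> nat) \<Rightarrow> (nat \<Rightarrow> complex^'x^'x) \<Rightarrow> complex^'x \<Rightarrow> bool" where
  "is_code R E v \<longleftrightarrow> v \<notin> range (\<lambda>u. E 0 *v u) \<and> (\<forall>z. v \<notin> range (\<lambda>u. Estar R 0 z *v u))"

definition delta :: "('x::finite \<Rightarrow> 'x \<Rightarrow> nat) \<Rightarrow> 'x \<Rightarrow> complex^'x \<Rightarrow> nat" where
  "delta R x v = (LEAST i. i \<noteq> 0 \<and> Estar R i x *v v \<noteq> 0)"

definition rel_codesign :: "('x::finite \<Rightarrow> 'x \<Rightarrow> nat) \<Rightarrow> nat \<Rightarrow> 'x \<Rightarrow> complex^'x \<Rightarrow> bool" where
  "rel_codesign R t x \<psi> \<longleftrightarrow>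
     (\<forall>i. 1 \<le> i \<and> i \<le> t \<longrightarrow>
        (\<exists>a b. (a \<noteq> 0 \<or> b \<noteq> 0) \<and>
               a *s (Estar R i x *v \<psi>) + b *s (adj R i *v axis x 1) = 0))"

end

theory Submission
  imports Defs "HOL-Computational_Algebra.Polynomial"
begin

text \<open>Write the code as \<open>\<chi> = p + c\<close> with \<open>p\<close> in the primary module
  \<open>P = span {A\<^sub>i xhat}\<close> and \<open>c \<bottom> P\<close>. Every \<open>E\<^sup>*\<^sub>i F\<close> maps \<open>P\<close> into \<open>span {A\<^sub>i xhat}\<close>,
  so it suffices that \<open>E\<^sup>*\<^sub>i\<close> vanishes on \<open>T c\<close> for \<open>1 \<le> i \<le> t\<close>. Otherwise \<open>T c\<close>, a module
  orthogonal to \<open>P\<close>, contains an irreducible module \<open>W\<close> with endpoint \<open>1 \<le> r \<le> t\<close>, hence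
  thin, and then \<open>W\<close> is spanned by the vectors \<open>A\<^sup>k w0\<close> for any nonzero \<open>w0 \<in> E\<^sup>*\<^sub>r W\<close>;
  \<open>A\<^sup>k w0\<close> is supported within distance \<open>r + k\<close> of \<open>x\<close>. The component \<open>u\<close> of \<open>\<chi>\<close> in \<open>W\<close>
  vanishes within distance \<open>\<delta>\<^sub>x(\<chi>)\<close> of \<open>x\<close>, and \<open>E\<^sub>j u \<noteq> 0\<close> only for \<open>j\<close> in
  \<open>S = {j \<in> W\<^sub>s\<^sup>*. E\<^sub>j \<chi> \<noteq> 0}\<close>, where \<open>|S| \<le> \<delta>\<^sub>x(\<chi>) - r\<close>. Hence \<open>u \<bottom> A\<^sup>k w0\<close> for
  \<open>k < |S|\<close>; as the eigenvalues of \<open>A\<close> are distinct, a Vandermonde argument extends this to all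
  \<open>k\<close>, so \<open>u = 0\<close>. Then \<open>\<chi>\<close>, and with it \<open>c\<close>, is orthogonal to \<open>W \<subseteq> T c\<close>, forcing \<open>W = 0\<close>.\<close>

lemma matrix_vector_mult_axis: "((M::'a::comm_ring_1^'n^'m) *v axis z 1) $ y = M $ y $ z"
  by (simp add: matrix_vector_mult_def axis_def if_distrib cong: if_cong)

lemma matrix_vector_mult_lincomb:
  "(\<chi> y z. \<Sum>j\<in>S. a j * (M j :: 'a::comm_ring_1^'n^'m) $ y $ z) *v v = (\<Sum>j\<in>S. a j *s (M j *v v))"
  by (simp add: vec_eq_iff matrix_vector_mult_def sum_component sum_distrib_left
      sum_distrib_right mult.assoc) (intro allI sum.swap)

lemma matrix_vector_mult_sum: "(\<Sum>j\<in>S. (M j :: 'a::comm_ring_1^'n^'m)) *v v = (\<Sum>j\<in>S. M j *v v)"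
  by (induction S rule: infinite_finite_induct) (auto simp: matrix_vector_mult_add_rdistrib)

lemma matrix_vector_mult_map_matrix: "map_matrix ((*) c) M *v v = c *s (M *v v)"
  by (simp add: vec_eq_iff matrix_vector_mult_def sum_distrib_left mult.assoc)

lemma matrix_eqI: "(\<And>v. (M::'a::comm_ring_1^'n^'m) *v v = N *v v) \<Longrightarrow> M = N"
  by (metis matrix_vector_mult_axis vec_eq_iff)

lemma matrix_vector_mult_span_closed:
  assumes "v \<in> vec.span S" "vec.subspace U" "\<And>s. s \<in> S \<Longrightarrow> (M::'a::field^'n^'m) *v s \<in> U"
  shows "M *v v \<in> U"
proof -
  have "M *v v \<in> vec.span ((*v) M ` S)" using assms(1) by (simp add: vec.span_image)
  also have "\<dots> \<subseteq> U" using assms(2,3) by (intro vec.span_minimal) auto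
  finally show ?thesis .
qed

lemma lincomb_mem_closed:
  fixes n :: nat
  assumes "\<And>M N. M \<in> S \<Longrightarrow> N \<in> S \<Longrightarrow> M + N \<in> S"
    and "\<And>c M. M \<in> S \<Longrightarrow> map_matrix ((*) c) M \<in> S"
    and "\<And>j. j \<le> n \<Longrightarrow> M j \<in> S"
  shows "(\<chi> y z. \<Sum>j\<le>n. c j * (M j :: 'a::comm_ring_1^'n^'m) $ y $ z) \<in> S"
  using assms(3)
proof (induction n)
  case 0
  have "(\<chi> y z. \<Sum>j\<le>0. c j * M j $ y $ z) = map_matrix ((*) (c 0)) (M 0)"
    by (simp add: map_matrix_def)
  then show ?case using assms(2) 0 by simp
next
  case (Suc n)
  have "(\<chi> y z. \<Sum>j\<le>Suc n. c j * M j $ y $ z) =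
        (\<chi> y z. \<Sum>j\<le>n. c j * M j $ y $ z) + map_matrix ((*) (c (Suc n))) (M (Suc n))"
    by (simp add: vec_eq_iff)
  then show ?case using assms(1,2) Suc by simp
qed

lemma subspace_dim_less:
  assumes "vec.subspace V" "vec.subspace W" "V \<subseteq> W" "V \<noteq> W"
  shows "vec.dim V < vec.dim W"
proof -
  have "vec.span V = V" "vec.span W = W" using assms(1,2) by simp_all
  with assms(3,4) have "vec.span V \<subset> vec.span W" by (simp only:)
  then show ?thesis by (rule vec.dim_psubset)
qed

lemma dim_image_le_1_span:
  assumes "vec.dim ((\<lambda>w. M *v w) ` W) \<le> 1" "v \<in> W" "M *v v \<noteq> 0" "u \<in> W"
  shows "(M::'a::field^'n^'m) *v u \<in> vec.span {M *v v}"
proof -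
  have "(\<lambda>w. M *v w) ` W \<subseteq> vec.span {M *v v}"
    using assms(1-3) by (intro vec.card_ge_dim_independent) (auto intro: vec.independent_insertI)
  then show ?thesis using assms(4) by blast
qed

lemma power_sums_vanish_imp_eq_0:
  fixes \<theta> c :: "nat \<Rightarrow> complex"
  assumes fin: "finite S" and inj: "inj_on \<theta> S"
    and sums: "\<And>k. k < card S \<Longrightarrow> (\<Sum>j\<in>S. \<theta> j ^ k * c j) = 0"
    and j0: "j0 \<in> S"
  shows "c j0 = 0"
proof -
  \<comment> \<open>Pair the power sums with the Lagrange-type polynomial vanishing at all \<open>\<theta> j\<close>, \<open>j \<noteq> j0\<close>.\<close>
  define p where "p = (\<Prod>j\<in>S - {j0}. [:- \<theta> j, 1:])"
  have "degree p \<le> card (S - {j0})"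
    unfolding p_def using degree_prod_sum_le[of "S - {j0}" "\<lambda>j. [:- \<theta> j, 1:]"] fin by simp
  also have "\<dots> < card S" using fin j0 by (rule card_Diff1_less)
  finally have deg: "degree p < card S" .
  have "(\<Sum>j\<in>S. poly p (\<theta> j) * c j) = (\<Sum>i\<le>degree p. coeff p i * (\<Sum>j\<in>S. \<theta> j ^ i * c j))"
    by (simp add: poly_altdef sum_distrib_left sum_distrib_right mult.assoc) (rule sum.swap)
  also have "\<dots> = 0" using sums deg by (intro sum.neutral) auto
  finally have "(\<Sum>j\<in>S. poly p (\<theta> j) * c j) = 0" .
  moreover have "poly p (\<theta> j) = 0" if "j \<in> S - {j0}" for j
    unfolding p_def poly_prod using fin that by (intro prod_zero) auto
  ultimately have "poly p (\<theta> j0) * c j0 = 0"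
    using fin j0 by (simp add: sum.remove)
  moreover have "poly p (\<theta> j0) \<noteq> 0"
    using inj j0 fin unfolding p_def poly_prod by (subst prod_zero_iff) (auto simp: inj_on_def)
  ultimately show ?thesis by simp
qed

section \<open>Hermitian inner product\<close>

definition cinner :: "complex^'n::finite \<Rightarrow> complex^'n \<Rightarrow> complex" where
  "cinner v w = (\<Sum>y\<in>UNIV. cnj (v $ y) * w $ y)"

definition adjoint_matrix :: "complex^'n::finite^'n \<Rightarrow> complex^'n^'n" where
  "adjoint_matrix F = (\<chi> i j. cnj (F $ j $ i))"

lemma adjoint_matrix_adjoint_matrix [simp]: "adjoint_matrix (adjoint_matrix F) = F"
  by (simp add: adjoint_matrix_def vec_eq_iff)

lemma adjoint_matrix_add: "adjoint_matrix (F + G) = adjoint_matrix F + adjoint_matrix G"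
  and adjoint_matrix_map_matrix:
    "adjoint_matrix (map_matrix ((*) c) F) = map_matrix ((*) (cnj c)) (adjoint_matrix F)"
  and adjoint_matrix_mult: "adjoint_matrix (F ** G) = adjoint_matrix G ** adjoint_matrix F"
  by (simp_all add: adjoint_matrix_def vec_eq_iff matrix_matrix_mult_def mult.commute)

lemma cinner_adjoint_left: "cinner (F *v v) w = cinner v (adjoint_matrix F *v w)"
  unfolding cinner_def adjoint_matrix_def matrix_vector_mult_def
  by (simp add: sum_distrib_left sum_distrib_right mult_ac) (rule sum.swap)

lemma cinner_adjoint_right: "cinner v (F *v w) = cinner (adjoint_matrix F *v v) w"
  using cinner_adjoint_left[of "adjoint_matrix F" v w] by simp

lemma cinner_commute: "cinner v w = cnj (cinner w v)"
  by (simp add: cinner_def mult.commute)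

lemma cinner_zero_left [simp]: "cinner 0 w = 0"
  and cinner_zero_right [simp]: "cinner v 0 = 0"
  by (simp_all add: cinner_def)

lemma cinner_add_left: "cinner (v + u) w = cinner v w + cinner u w"
  and cinner_add_right: "cinner v (w + u) = cinner v w + cinner v u"
  and cinner_diff_right: "cinner v (w - u) = cinner v w - cinner v u"
  and cinner_scale_left: "cinner (a *s v) w = cnj a * cinner v w"
  and cinner_scale_right: "cinner v (a *s w) = a * cinner v w"
  by (simp_all add: cinner_def algebra_simps sum.distrib sum_subtractf sum_distrib_left)

lemma cinner_sum_right: "cinner v (\<Sum>j\<in>S. f j) = (\<Sum>j\<in>S. cinner v (f j))"
  by (simp add: cinner_def sum_component sum_distrib_left) (rule sum.swap)

lemma inner_eq_Re_cinner: "inner v w = Re (cinner v w)"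
  by (simp add: inner_vec_def cinner_def inner_complex_def Re_sum)

lemma cinner_self_eq_0: "cinner v v = 0 \<longleftrightarrow> v = 0"
  by (metis Re_complex_of_real cinner_zero_left inner_eq_Re_cinner inner_eq_zero_iff
      zero_complex.simps(1))

lemma cinner_span_eq_0:
  assumes "v \<in> vec.span S" "\<And>s. s \<in> S \<Longrightarrow> cinner s u = 0"
  shows "cinner v u = 0"
proof -
  have "vec.subspace {v. cinner v u = 0}"
    unfolding vec.subspace_def by (simp add: cinner_add_left cinner_scale_left)
  then have "vec.span S \<subseteq> {v. cinner v u = 0}" using assms(2) by (intro vec.span_minimal) auto
  then show ?thesis using assms(1) by blast
qed

lemma vec_subspace_imp_subspace: "vec.subspace (W::(complex^'n) set) \<Longrightarrow> subspace W"
proof -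
  have "scaleR r v = complex_of_real r *s v" for r and v :: "complex^'n"
    unfolding vec_eq_iff vector_scaleR_component vector_smult_component
    by (simp add: scaleR_conv_of_real)
  then show "vec.subspace W \<Longrightarrow> subspace W"
    unfolding subspace_def vec.subspace_def by simp
qed

lemma orthogonal_decomposition:
  fixes W :: "(complex^'n::finite) set"
  assumes "vec.subspace W"
  obtains u z where "u \<in> W" "\<And>w. w \<in> W \<Longrightarrow> cinner w z = 0" "v = u + z"
proof -
  have span: "span W = W" using vec_subspace_imp_subspace[OF assms] by simp
  obtain u z where u: "u \<in> span W" and z: "\<And>w. w \<in> span W \<Longrightarrow> orthogonal z w" and v: "v = u + z"
    using orthogonal_subspace_decomp_exists[of W v] by blast
  have "cinner w z = 0" if w: "w \<in> W" for w
  proof -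
    \<comment> \<open>Real orthogonality to both \<open>w\<close> and \<open>\<i> w\<close> gives complex orthogonality.\<close>
    have "\<i> *s w \<in> W" using w assms by (rule vec.subspace_scale[rotated])
    then have "inner z (\<i> *s w) = 0" "inner z w = 0" using z span w unfolding orthogonal_def by auto
    then have "cinner z w = 0"
      by (simp add: inner_eq_Re_cinner cinner_scale_right complex_eq_iff)
    then show ?thesis by (subst cinner_commute) simp
  qed
  then show ?thesis using that u v span by blast
qed

section \<open>Modules of an adjoint-closed matrix algebra\<close>

lemma is_moduleD:
  assumes "is_module T W"
  shows "vec.subspace W" and "\<And>F w. F \<in> T \<Longrightarrow> w \<in> W \<Longrightarrow> F *v w \<in> W"
  using assms unfolding is_module_def by blast+

lemma irreducible_moduleD: "irreducible_module T W \<Longrightarrow> is_module T W"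
  by (simp add: irreducible_module_def)

context
  fixes T :: "(complex^'n::finite^'n) set"
  assumes adjoint_closed: "\<And>F. F \<in> T \<Longrightarrow> adjoint_matrix F \<in> T"
begin

lemma is_module_orthogonal_complement:
  assumes "is_module T U" "is_module T W"
  shows "is_module T {w \<in> W. \<forall>u\<in>U. cinner u w = 0}"
  unfolding is_module_def vec.subspace_def
proof (intro conjI ballI allI impI)
  show "F *v w \<in> {w \<in> W. \<forall>u\<in>U. cinner u w = 0}"
    if "F \<in> T" "w \<in> {w \<in> W. \<forall>u\<in>U. cinner u w = 0}" for F w
    using that is_moduleD[OF assms(1)] is_moduleD[OF assms(2)] adjoint_closed
    by (auto simp: cinner_adjoint_right)
qed (use is_moduleD(1)[OF assms(2)] in
      \<open>auto simp: vec.subspace_def cinner_add_right cinner_scale_right\<close>)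

lemma module_component_annihilated:
  assumes "is_module T W" "u \<in> W" "\<And>w. w \<in> W \<Longrightarrow> cinner w z = 0"
    and "G \<in> T" "G *v (u + z) = 0"
  shows "G *v u = 0"
proof -
  have "adjoint_matrix G *v (G *v u) \<in> W"
    using assms(1,2,4) adjoint_closed is_moduleD(2) by blast
  then have "cinner (G *v u) (G *v z) = 0"
    using assms(3) by (simp add: cinner_adjoint_right)
  moreover have "G *v u = - (G *v z)"
    using assms(5) by (simp add: matrix_vector_right_distrib eq_neg_iff_add_eq_0)
  ultimately have "cinner (G *v u) (G *v u) = 0"
    by (metis add.inverse_inverse cinner_diff_right diff_0 diff_self)
  then show ?thesis by (simp add: cinner_self_eq_0)
qed

text \<open>A submodule of least dimension on which \<open>G\<close> does not vanish is irreducible, since it is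
  the orthogonal sum of any submodule and its complement.\<close>
lemma exists_irreducible_submodule:
  assumes "is_module T N" "v \<in> N" "G *v v \<noteq> 0"
  shows "\<exists>W. irreducible_module T W \<and> W \<subseteq> N \<and> (\<exists>w\<in>W. G *v w \<noteq> 0)"
proof -
  define good where "good U \<longleftrightarrow> is_module T U \<and> U \<subseteq> N \<and> (\<exists>w\<in>U. G *v w \<noteq> 0)" for U
  have "good N" using assms unfolding good_def by blast
  then obtain W where W: "good W" and least: "\<And>U. good U \<Longrightarrow> vec.dim W \<le> vec.dim U"
    using ex_has_least_nat[of good N vec.dim] by blast
  have Wm: "is_module T W" and WN: "W \<subseteq> N" using W unfolding good_def by auto
  obtain w where w: "w \<in> W" "G *v w \<noteq> 0" using W unfolding good_def by blast
  have "U = {0} \<or> U = W" if Um: "is_module T U" and UW: "U \<subseteq> W" for U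
  proof (rule ccontr)
    assume nontrivial: "\<not> (U = {0} \<or> U = W)"
    define C where "C = {w \<in> W. \<forall>u\<in>U. cinner u w = 0}"
    have Cm: "is_module T C" unfolding C_def using Um Wm by (rule is_module_orthogonal_complement)
    have "\<not> good U"
      using least[of U] subspace_dim_less[OF is_moduleD(1)[OF Um] is_moduleD(1)[OF Wm] UW]
        nontrivial by fastforce
    then have GU: "G *v u = 0" if "u \<in> U" for u using Um UW WN that unfolding good_def by blast
    obtain u where u: "u \<in> U" "u \<noteq> 0"
      using nontrivial vec.subspace_0[OF is_moduleD(1)[OF Um]] by blast
    then have "u \<notin> C" using cinner_self_eq_0[of u] by (auto simp: C_def)
    then have "\<not> good C"
      using least[of C] subspace_dim_less[OF is_moduleD(1)[OF Cm] is_moduleD(1)[OF Wm]] u UW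
      by (fastforce simp: C_def)
    then have GC: "G *v c = 0" if "c \<in> C" for c using Cm WN that unfolding good_def C_def by blast
    obtain u1 z where u1: "u1 \<in> U" and z: "\<And>u. u \<in> U \<Longrightarrow> cinner u z = 0" and wz: "w = u1 + z"
      using orthogonal_decomposition[OF is_moduleD(1)[OF Um], of w] by blast
    have "z = w - u1" using wz by simp
    then have "z \<in> C"
      using z w(1) u1 UW vec.subspace_diff[OF is_moduleD(1)[OF Wm]] unfolding C_def by blast
    then show False using w(2) GU[OF u1] GC wz by (simp add: matrix_vector_right_distrib)
  qed
  then have "irreducible_module T W"
    unfolding irreducible_module_def using Wm w by auto
  then show ?thesis using WN w by blast
qed

end

section \<open>Metric association schemes\<close>

lemma adj_nth: "adj R i $ y $ z = (if R y z = i then 1 else 0)"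
  by (simp add: adj_def)

lemma terwilliger_scale: "F \<in> terwilliger R D E x \<Longrightarrow> map_matrix ((*) c) F \<in> terwilliger R D E x"
  unfolding map_matrix_def by (rule terwilliger.scale)

lemma terwilliger_lincomb:
  "(\<And>j. j \<le> (n::nat) \<Longrightarrow> M j \<in> terwilliger R D E x) \<Longrightarrow>
    (\<chi> y z. \<Sum>j\<le>n. c j * M j $ y $ z) \<in> terwilliger R D E x"
  by (rule lincomb_mem_closed) (auto intro: terwilliger.add terwilliger_scale)

lemma terwilliger_zero: "0 \<in> terwilliger R D E x"
proof -
  have "map_matrix ((*) 0) (adj R 0) \<in> terwilliger R D E x"
    by (intro terwilliger_scale terwilliger.gen_A) simp
  moreover have "map_matrix ((*) 0) (adj R 0) = 0" by (simp add: vec_eq_iff)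
  ultimately show ?thesis by simp
qed

locale based_metric_scheme =
  fixes R :: "'x::finite \<Rightarrow> 'x \<Rightarrow> nat" and D :: nat and E :: "nat \<Rightarrow> complex^'x^'x" and x :: 'x
  assumes scheme: "sym_assoc_scheme R D"
    and metric: "metric_scheme R"
    and idempotents: "primitive_idempotents R D E"
begin

abbreviation "A \<equiv> adj R 1"
abbreviation "xhat \<equiv> (axis x 1 :: complex^'x)"
abbreviation "T \<equiv> terwilliger R D E x"
abbreviation "Es i \<equiv> Estar R i x"

lemma R_le_D: "R y z \<le> D"
  and R_eq_0_iff: "R y z = 0 \<longleftrightarrow> y = z"
  and R_sym: "R y z = R z y"
  and R_surj: "i \<le> D \<Longrightarrow> \<exists>y z. R y z = i"
  using scheme unfolding sym_assoc_scheme_def by simp_all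

lemma R_self [simp]: "R y y = 0"
  using R_eq_0_iff by blast

lemma card_common_eq:
  assumes "R y z = R y' z'"
  shows "card {w. R y w = i \<and> R w z = j} = card {w. R y' w = i \<and> R w z' = j}"
proof (cases "i \<le> D \<and> j \<le> D")
  case True
  then obtain p where "\<forall>y z. R y z = R y' z' \<longrightarrow> card {w. R y w = i \<and> R w z = j} = p"
    using scheme R_le_D[of y' z'] unfolding sym_assoc_scheme_def by blast
  then show ?thesis using assms by simp
next
  case False
  then have "{w. R y w = i \<and> R w z = j} = {}" "{w. R y' w = i \<and> R w z' = j} = {}"
    using False R_le_D[of y] R_le_D[of _ z] R_le_D[of y'] R_le_D[of _ z'] by fastforce+
  then show ?thesis by (simp only: card.empty)
qed

definition intersection_number :: "nat \<Rightarrow> nat \<Rightarrow> nat \<Rightarrow> nat" where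
  "intersection_number i j l =
    (let (y, z) = SOME (y, z). R y z = l in card {w. R y w = i \<and> R w z = j})"

lemma card_common_eq_intersection_number:
  "card {w. R y w = i \<and> R w z = j} = intersection_number i j (R y z)"
proof -
  obtain y' z' where choice: "(SOME (y', z'). R y' z' = R y z) = (y', z')" by fastforce
  from someI[of "\<lambda>(y', z'). R y' z' = R y z" "(y, z)"] have "R y z = R y' z'"
    unfolding choice by simp
  then have "card {w. R y w = i \<and> R w z = j} = card {w. R y' w = i \<and> R w z' = j}"
    by (rule card_common_eq)
  also have "\<dots> = intersection_number i j (R y z)"
    unfolding intersection_number_def choice by simp
  finally show ?thesis .
qed

lemma exists_at_distance: "l \<le> D \<Longrightarrow> \<exists>y. R y x = l"
proof -
  assume "l \<le> D"
  then obtain a b where ab: "R a b = l" using R_surj by blast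
  then have "b \<in> {w. R a w = l \<and> R w a = l}" using R_sym[of b a] by simp
  then have "card {w. R a w = l \<and> R w a = l} \<noteq> 0" by (metis card_0_eq empty_iff finite)
  then have "card {w. R x w = l \<and> R w x = l} \<noteq> 0" using card_common_eq[of a a x x l l] by simp
  then show ?thesis by (metis (mono_tags, lifting) card.empty empty_Collect_eq)
qed

definition edges :: "('x \<times> 'x) set" where "edges = {(u, v). R u v = 1}"

lemma relpow_edges_R: "(y, z) \<in> edges ^^ R y z"
  and R_le_if_relpow_edges: "(y, z) \<in> edges ^^ m \<Longrightarrow> R y z \<le> m"
  using metric unfolding metric_scheme_def edges_def by (blast, meson not_le)

lemma R_triangle: "R y z \<le> R y w + R w z"
proof -
  have "(y, z) \<in> edges ^^ (R y w + R w z)"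
    unfolding relpow_add using relpow_edges_R[of y w] relpow_edges_R[of w z] by (rule relcompI)
  then show ?thesis by (rule R_le_if_relpow_edges)
qed

lemma R_Suc_step: assumes "R y z = Suc i" shows "\<exists>w. R y w = 1 \<and> R w z = i"
proof -
  have "(y, z) \<in> edges ^^ Suc i" using relpow_edges_R[of y z] assms by simp
  then obtain w where "(y, w) \<in> edges" "(w, z) \<in> edges ^^ i" by (meson relpow_Suc_D2)
  then have "R y w = 1" "R w z \<le> i" using R_le_if_relpow_edges edges_def by auto
  moreover have "Suc i \<le> 1 + R w z" using R_triangle[of y z w] \<open>R y w = 1\<close> assms by simp
  ultimately show ?thesis by (intro exI[of _ w]) auto
qed

lemma intersection_number_1_eq_0:
  assumes "Suc k < l" "l \<le> D" shows "intersection_number 1 k l = 0"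
proof -
  obtain y z where yz: "R y z = l" using R_surj assms(2) by blast
  have "\<not> (R y w = 1 \<and> R w z = k)" for w
    using R_triangle[of y z w] yz assms(1) by auto
  then have empty: "{w. R y w = 1 \<and> R w z = k} = {}" by blast
  show ?thesis
    unfolding card_common_eq_intersection_number[of y 1 z k, unfolded yz, symmetric] empty by simp
qed

lemma intersection_number_1_Suc_neq_0:
  assumes "Suc k \<le> D" shows "intersection_number 1 k (Suc k) \<noteq> 0"
proof -
  obtain y z where yz: "R y z = Suc k" using R_surj assms by blast
  then obtain w where "w \<in> {w. R y w = 1 \<and> R w z = k}" using R_Suc_step by blast
  then have "card {w. R y w = 1 \<and> R w z = k} \<noteq> 0" by (metis card_0_eq empty_iff finite)
  then show ?thesis unfolding card_common_eq_intersection_number[of y 1 z k, unfolded yz] .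
qed

lemma adj_mult_adj_nth: "(adj R i ** adj R j) $ y $ z = of_nat (intersection_number i j (R y z))"
proof -
  have "(adj R i ** adj R j) $ y $ z = (\<Sum>w\<in>UNIV. if R y w = i \<and> R w z = j then 1 else 0)"
    by (simp add: matrix_matrix_mult_def adj_nth if_distrib cong: if_cong) (rule sum.cong, auto)
  also have "\<dots> = of_nat (card {w. R y w = i \<and> R w z = j})"
    by (simp add: sum.If_cases)
  finally show ?thesis by (simp add: card_common_eq_intersection_number)
qed

lemma adj_eq_0: "D < l \<Longrightarrow> adj R l = 0"
  using R_le_D by (auto simp: vec_eq_iff adj_nth dest: le_less_trans)

lemma adj_0_eq_mat_1: "adj R 0 = mat 1"
  by (simp add: vec_eq_iff adj_nth mat_def R_eq_0_iff)

lemma adjoint_matrix_adj [simp]: "adjoint_matrix (adj R l) = adj R l"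
  by (simp add: adjoint_matrix_def vec_eq_iff adj_nth R_sym)

section \<open>Bose--Mesner algebra and the eigenvalues of \<open>A\<close>\<close>

definition bose_mesner_coeffs :: "complex^'x^'x \<Rightarrow> (nat \<Rightarrow> complex) \<Rightarrow> bool" where
  "bose_mesner_coeffs B c \<longleftrightarrow> (\<forall>y z. B $ y $ z = c (R y z))"

lemma bose_mesner_coeffs_adj: "bose_mesner_coeffs (adj R i) (\<lambda>l. if l = i then 1 else 0)"
  by (simp add: bose_mesner_coeffs_def adj_nth)

lemma bose_mesner_coeffs_adj_mult_adj:
  "bose_mesner_coeffs (adj R i ** adj R j) (\<lambda>l. of_nat (intersection_number i j l))"
  by (simp add: bose_mesner_coeffs_def adj_mult_adj_nth)

lemma sum_adj_nth: "(\<Sum>j\<le>D. c j * adj R j $ y $ z) = c (R y z)"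
proof -
  have "(\<Sum>j\<le>D. c j * adj R j $ y $ z) = (\<Sum>j\<le>D. if j = R y z then c j else 0)"
    by (intro sum.cong) (auto simp: adj_nth)
  also have "\<dots> = c (R y z)" using R_le_D by simp
  finally show ?thesis .
qed

lemma bose_mesner_coeffs_expand: "bose_mesner_coeffs B c \<Longrightarrow> B = (\<chi> y z. \<Sum>j\<le>D. c j * adj R j $ y $ z)"
  by (simp add: bose_mesner_coeffs_def sum_adj_nth vec_eq_iff)

lemma bose_mesner_iff: "B \<in> bose_mesner R D \<longleftrightarrow> (\<exists>c. bose_mesner_coeffs B c)"
proof
  assume "B \<in> bose_mesner R D"
  then obtain c where "B = (\<chi> y z. \<Sum>j\<le>D. c j * adj R j $ y $ z)"
    unfolding bose_mesner_def by blast
  then have "bose_mesner_coeffs B c" by (simp add: bose_mesner_coeffs_def sum_adj_nth)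
  then show "\<exists>c. bose_mesner_coeffs B c" by blast
qed (auto simp: bose_mesner_def dest: bose_mesner_coeffs_expand)

lemma bose_mesner_coeffs_mult_vector:
  "bose_mesner_coeffs B c \<Longrightarrow> B *v v = (\<Sum>l\<le>D. c l *s (adj R l *v v))"
  by (subst bose_mesner_coeffs_expand) (auto simp: matrix_vector_mult_lincomb)

lemma bose_mesner_coeffs_eqI:
  assumes "bose_mesner_coeffs B c" "bose_mesner_coeffs B' c'" "B *v xhat = B' *v xhat"
  shows "B = B'"
proof -
  have "c l = c' l" if l: "l \<le> D" for l
  proof -
    obtain y where y: "R y x = l" using exists_at_distance[OF l] by blast
    have "(B *v xhat) $ y = (B' *v xhat) $ y" using assms(3) by simp
    then show ?thesis
      using assms(1,2) y by (simp add: matrix_vector_mult_axis bose_mesner_coeffs_def)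
  qed
  then show ?thesis using assms(1,2) R_le_D by (simp add: bose_mesner_coeffs_def vec_eq_iff)
qed

lemma E_in_bose_mesner: "j \<le> D \<Longrightarrow> E j \<in> bose_mesner R D"
  and E_neq_0: "j \<le> D \<Longrightarrow> E j \<noteq> 0"
  and E_mult_E: "i \<le> D \<Longrightarrow> j \<le> D \<Longrightarrow> E i ** E j = (if i = j then E i else 0)"
  and sum_E: "(\<Sum>j\<le>D. E j) = mat 1"
  using idempotents unfolding primitive_idempotents_def by simp_all

definition E_coeffs :: "nat \<Rightarrow> nat \<Rightarrow> complex" where
  "E_coeffs j = (SOME c. bose_mesner_coeffs (E j) c)"

lemma bose_mesner_coeffs_E: "j \<le> D \<Longrightarrow> bose_mesner_coeffs (E j) (E_coeffs j)"
  unfolding E_coeffs_def using E_in_bose_mesner bose_mesner_iff by (metis someI_ex)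

lemma E_mult_E_mult_vector:
  "i \<le> D \<Longrightarrow> j \<le> D \<Longrightarrow> E i *v (E j *v v) = (if i = j then E i *v v else 0)"
  by (simp add: matrix_vector_mul_assoc E_mult_E)

lemma sum_E_mult_vector: "(\<Sum>j\<le>D. E j *v v) = v"
  using matrix_vector_mult_sum[of E "{..D}" v] by (simp add: sum_E)

lemma E_mult_xhat_neq_0: "j \<le> D \<Longrightarrow> E j *v xhat \<noteq> 0"
proof
  assume "j \<le> D" "E j *v xhat = 0"
  moreover have "bose_mesner_coeffs 0 (\<lambda>_. 0)" by (simp add: bose_mesner_coeffs_def)
  ultimately have "E j = 0" using bose_mesner_coeffs_eqI[OF bose_mesner_coeffs_E] by simp
  then show False using E_neq_0 \<open>j \<le> D\<close> by blast
qed

lemma inj_on_E_mult_xhat: "inj_on (\<lambda>j. E j *v xhat) {..D}"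
proof (rule inj_onI)
  fix i j assume ij: "i \<in> {..D}" "j \<in> {..D}" "E i *v xhat = E j *v xhat"
  show "i = j"
  proof (rule ccontr)
    assume "i \<noteq> j"
    then have "E j *v (E i *v xhat) = 0" using E_mult_E_mult_vector[of j i xhat] ij(1,2) by auto
    then have "E j *v (E j *v xhat) = 0" using ij(3) by simp
    then have "E j *v xhat = 0" using E_mult_E_mult_vector[of j j xhat] ij(2) by simp
    then show False using E_mult_xhat_neq_0 ij by simp
  qed
qed

lemma independent_E_mult_xhat: "vec.independent ((\<lambda>j. E j *v xhat) ` {..D})"
proof
  assume "vec.dependent ((\<lambda>j. E j *v xhat) ` {..D})"
  then obtain j where j: "j \<le> D"
    and "E j *v xhat \<in> vec.span ((\<lambda>j. E j *v xhat) ` {..D} - {E j *v xhat})"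
    unfolding vec.dependent_def by blast
  moreover have "(\<lambda>j. E j *v xhat) ` {..D} - {E j *v xhat} \<subseteq> (\<lambda>j. E j *v xhat) ` ({..D} - {j})"
    by blast
  ultimately have "E j *v xhat \<in> vec.span ((\<lambda>j. E j *v xhat) ` ({..D} - {j}))"
    using vec.span_mono by blast
  moreover have "vec.span ((\<lambda>j. E j *v xhat) ` ({..D} - {j})) \<subseteq> {v. E j *v v = 0}"
    using j E_mult_E_mult_vector[of j]
    by (intro vec.span_minimal) (auto simp: vec.subspace_def matrix_vector_right_distrib vec.scale)
  ultimately have "E j *v (E j *v xhat) = 0" by blast
  then show False using E_mult_E_mult_vector[of j j] E_mult_xhat_neq_0 j by simp
qed

text \<open>The \<open>D + 1\<close> independent vectors \<open>E\<^sub>j xhat\<close> lie in the span of the \<open>D + 1\<close> vectors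
  \<open>A\<^sub>l xhat\<close>, so both families span the same space.\<close>
lemma span_adj_mult_xhat_subset:
  "vec.span ((\<lambda>l. adj R l *v xhat) ` {..D}) \<subseteq> vec.span ((\<lambda>j. E j *v xhat) ` {..D})"
proof (rule vec.card_ge_dim_independent[OF _ independent_E_mult_xhat])
  show "(\<lambda>j. E j *v xhat) ` {..D} \<subseteq> vec.span ((\<lambda>l. adj R l *v xhat) ` {..D})"
    using bose_mesner_coeffs_mult_vector[OF bose_mesner_coeffs_E]
    by (auto intro: vec.span_sum vec.span_scale vec.span_base)
  have "vec.dim (vec.span ((\<lambda>l. adj R l *v xhat) ` {..D})) \<le> card ((\<lambda>l. adj R l *v xhat) ` {..D})"
    by (rule vec.dim_le_card) auto
  also have "\<dots> \<le> card ((\<lambda>j. E j *v xhat) ` {..D})"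
    using card_image_le[of "{..D}"] card_image[OF inj_on_E_mult_xhat] by simp
  finally show "vec.dim (vec.span ((\<lambda>l. adj R l *v xhat) ` {..D})) \<le>
      card ((\<lambda>j. E j *v xhat) ` {..D})" .
qed

lemma bose_mesner_in_span_E:
  assumes "bose_mesner_coeffs B c"
  shows "\<exists>a. B = (\<chi> y z. \<Sum>j\<le>D. a j * E j $ y $ z)"
proof -
  have "B *v xhat \<in> vec.span ((\<lambda>l. adj R l *v xhat) ` {..D})"
    unfolding bose_mesner_coeffs_mult_vector[OF assms]
    by (intro vec.span_sum vec.span_scale vec.span_base) auto
  then have "B *v xhat \<in> vec.span ((\<lambda>j. E j *v xhat) ` {..D})"
    using span_adj_mult_xhat_subset by blast
  then obtain u where "B *v xhat = (\<Sum>v\<in>(\<lambda>j. E j *v xhat) ` {..D}. u v *s v)"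
    using vec.span_finite[of "(\<lambda>j. E j *v xhat) ` {..D}"] by auto
  then obtain a where a: "B *v xhat = (\<Sum>j\<le>D. a j *s (E j *v xhat))"
    unfolding sum.reindex[OF inj_on_E_mult_xhat] by auto
  define B' where "B' = (\<chi> y z. \<Sum>j\<le>D. a j * E j $ y $ z)"
  have "bose_mesner_coeffs B' (\<lambda>l. \<Sum>j\<le>D. a j * E_coeffs j l)"
    using bose_mesner_coeffs_E unfolding bose_mesner_coeffs_def B'_def by simp
  moreover have "B *v xhat = B' *v xhat" unfolding B'_def matrix_vector_mult_lincomb a ..
  ultimately have "B = B'" by (rule bose_mesner_coeffs_eqI[OF assms])
  then show ?thesis unfolding B'_def by blast
qed

inductive_set A_polynomials :: "(complex^'x^'x) set" where
  one: "mat 1 \<in> A_polynomials"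
| mult_A: "M \<in> A_polynomials \<Longrightarrow> A ** M \<in> A_polynomials"
| add: "M \<in> A_polynomials \<Longrightarrow> N \<in> A_polynomials \<Longrightarrow> M + N \<in> A_polynomials"
| scale: "M \<in> A_polynomials \<Longrightarrow> map_matrix ((*) c) M \<in> A_polynomials"

lemma A_polynomials_lincomb:
  "(\<And>j. j \<le> (n::nat) \<Longrightarrow> M j \<in> A_polynomials) \<Longrightarrow>
    (\<chi> y z. \<Sum>j\<le>n. c j * M j $ y $ z) \<in> A_polynomials"
  by (rule lincomb_mem_closed) (auto intro: A_polynomials.add A_polynomials.scale)

text \<open>Distance-regularity: \<open>A A\<^sub>k = p\<^sup>k\<^sup>+\<^sup>1\<^sub>1\<^sub>k A\<^sub>k\<^sub>+\<^sub>1 + (a combination of A\<^sub>0, \<dots>, A\<^sub>k)\<close>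
  with \<open>p\<^sup>k\<^sup>+\<^sup>1\<^sub>1\<^sub>k \<noteq> 0\<close>.\<close>
lemma adj_in_A_polynomials: "l \<le> D \<Longrightarrow> adj R l \<in> A_polynomials"
proof (induction l rule: less_induct)
  case (less l)
  show ?case
  proof (cases l)
    case 0
    then show ?thesis by (simp add: adj_0_eq_mat_1 A_polynomials.one)
  next
    case (Suc k)
    define p where "p m = (of_nat (intersection_number 1 k m) :: complex)" for m
    have p: "p (Suc k) \<noteq> 0"
      using intersection_number_1_Suc_neq_0 less.prems Suc by (simp add: p_def)
    define Q where "Q = (\<chi> y z. \<Sum>m\<le>k. (- p m) * adj R m $ y $ z)"
    have "(A ** adj R k) $ y $ z =
        (\<Sum>m\<le>k. p m * adj R m $ y $ z) + p (Suc k) * adj R (Suc k) $ y $ z" for y z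
    proof -
      have "{..D} = {..Suc k} \<union> {Suc (Suc k)..D}" using less.prems Suc by auto
      moreover have "p m = 0" if "m \<in> {Suc (Suc k)..D}" for m
        using intersection_number_1_eq_0 that by (simp add: p_def)
      ultimately have "(\<Sum>m\<le>D. p m * adj R m $ y $ z) = (\<Sum>m\<le>Suc k. p m * adj R m $ y $ z)"
        by (simp add: sum.union_disjoint)
      then show ?thesis
        using bose_mesner_coeffs_expand[OF bose_mesner_coeffs_adj_mult_adj[of 1 k]]
        by (simp add: p_def vec_eq_iff)
    qed
    then have "adj R l = map_matrix ((*) (1 / p (Suc k))) (A ** adj R k + Q)"
      using p Suc by (simp add: vec_eq_iff Q_def sum_negf field_simps)
    moreover have "Q \<in> A_polynomials"
      unfolding Q_def using less Suc by (intro A_polynomials_lincomb) simp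
    moreover have "adj R k \<in> A_polynomials" using less Suc by simp
    then have "A ** adj R k \<in> A_polynomials" by (rule A_polynomials.mult_A)
    ultimately show ?thesis by (simp add: A_polynomials.add A_polynomials.scale)
  qed
qed

lemma A_polynomials_invariant:
  assumes "M \<in> A_polynomials" "vec.subspace K" "\<And>v. v \<in> K \<Longrightarrow> A *v v \<in> K" "v \<in> K"
  shows "M *v v \<in> K"
  using assms(1,4)
proof (induction arbitrary: v rule: A_polynomials.induct)
  case (mult_A M)
  then show ?case by (simp add: matrix_vector_mul_assoc[symmetric] assms(3) del: One_nat_def)
qed (simp_all add: matrix_vector_mult_add_rdistrib matrix_vector_mult_map_matrix
       vec.subspace_add vec.subspace_scale assms(2))

definition eigenvalue :: "nat \<Rightarrow> complex" where
  "eigenvalue = (SOME \<theta>. A = (\<chi> y z. \<Sum>j\<le>D. \<theta> j * E j $ y $ z))"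

lemma A_mult_vector_eq_sum_E: "A *v v = (\<Sum>j\<le>D. eigenvalue j *s (E j *v v))"
proof -
  have "\<exists>\<theta>. A = (\<chi> y z. \<Sum>j\<le>D. \<theta> j * E j $ y $ z)"
    by (rule bose_mesner_in_span_E[OF bose_mesner_coeffs_adj])
  then have "A = (\<chi> y z. \<Sum>j\<le>D. eigenvalue j * E j $ y $ z)"
    unfolding eigenvalue_def by (rule someI_ex)
  then have "A *v v = (\<chi> y z. \<Sum>j\<le>D. eigenvalue j * E j $ y $ z) *v v" by (rule arg_cong)
  then show ?thesis unfolding matrix_vector_mult_lincomb .
qed

lemma A_mult_E: assumes "j \<le> D" shows "A *v (E j *v v) = eigenvalue j *s (E j *v v)"
proof -
  have "A *v (E j *v v) = (\<Sum>i\<le>D. if i = j then eigenvalue j *s (E j *v v) else 0)"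
    unfolding A_mult_vector_eq_sum_E using assms
    by (intro sum.cong) (auto simp: E_mult_E_mult_vector)
  also have "\<dots> = eigenvalue j *s (E j *v v)" using assms by simp
  finally show ?thesis .
qed

lemma A_polynomial_mult_E:
  "M \<in> A_polynomials \<Longrightarrow> \<exists>\<mu>. \<forall>j\<le>D. \<forall>w. M *v (E j *v w) = \<mu> (eigenvalue j) *s (E j *v w)"
proof (induction rule: A_polynomials.induct)
  case one
  show ?case by (rule exI[of _ "\<lambda>_. 1"]) simp
next
  case (mult_A M)
  then obtain \<mu> where \<mu>: "\<forall>j\<le>D. \<forall>w. M *v (E j *v w) = \<mu> (eigenvalue j) *s (E j *v w)" by blast
  have "(A ** M) *v (E j *v w) = (eigenvalue j * \<mu> (eigenvalue j)) *s (E j *v w)" if "j \<le> D" for j w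
    using that \<mu>
    by (simp add: matrix_vector_mul_assoc[symmetric] vec.scale A_mult_E del: One_nat_def)
  then show ?case by (intro exI[of _ "\<lambda>t. t * \<mu> t"]) auto
next
  case (add M N)
  then obtain \<mu> \<nu> where \<mu>: "\<forall>j\<le>D. \<forall>w. M *v (E j *v w) = \<mu> (eigenvalue j) *s (E j *v w)"
    and \<nu>: "\<forall>j\<le>D. \<forall>w. N *v (E j *v w) = \<nu> (eigenvalue j) *s (E j *v w)" by blast
  have "(M + N) *v (E j *v w) = (\<mu> (eigenvalue j) + \<nu> (eigenvalue j)) *s (E j *v w)"
    if "j \<le> D" for j w
    using that \<mu> \<nu> by (simp add: matrix_vector_mult_add_rdistrib vector_sadd_rdistrib)
  then show ?case by (intro exI[of _ "\<lambda>t. \<mu> t + \<nu> t"]) auto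
next
  case (scale M c)
  then obtain \<mu> where \<mu>: "\<forall>j\<le>D. \<forall>w. M *v (E j *v w) = \<mu> (eigenvalue j) *s (E j *v w)" by blast
  have "map_matrix ((*) c) M *v (E j *v w) = (c * \<mu> (eigenvalue j)) *s (E j *v w)"
    if "j \<le> D" for j w
    using that \<mu> by (simp add: matrix_vector_mult_map_matrix)
  then show ?case by (intro exI[of _ "\<lambda>t. c * \<mu> t"]) auto
qed

lemma E_in_A_polynomials: "j \<le> D \<Longrightarrow> E j \<in> A_polynomials"
  by (subst bose_mesner_coeffs_expand[OF bose_mesner_coeffs_E], assumption)
    (intro A_polynomials_lincomb adj_in_A_polynomials)

text \<open>\<open>E\<^sub>j\<close> is a polynomial in \<open>A\<close>, so it acts by a scalar depending only on the eigenvalue on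
  every eigenspace \<open>E\<^sub>m V\<close>; it is \<open>1\<close> on \<open>E\<^sub>j V\<close> and \<open>0\<close> on \<open>E\<^sub>m V\<close>, \<open>m \<noteq> j\<close>.\<close>
lemma inj_on_eigenvalue: "inj_on eigenvalue {..D}"
proof (rule inj_onI, rule ccontr)
  fix j m assume jm: "j \<in> {..D}" "m \<in> {..D}" "eigenvalue j = eigenvalue m" "j \<noteq> m"
  obtain \<mu> where \<mu>: "\<forall>i\<le>D. \<forall>w. E j *v (E i *v w) = \<mu> (eigenvalue i) *s (E i *v w)"
    using A_polynomial_mult_E[OF E_in_A_polynomials] jm by blast
  obtain w where w: "E m *v w \<noteq> 0" using E_neq_0[of m] jm matrix_eqI[of "E m" 0] by auto
  have "0 = E j *v (E m *v w)" using E_mult_E_mult_vector jm by simp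
  also have "\<dots> = \<mu> (eigenvalue j) *s (E m *v w)" using \<mu> jm by simp
  finally have "\<mu> (eigenvalue j) = 0" using w by (metis vector_mul_eq_0)
  obtain w' where w': "E j *v w' \<noteq> 0" using E_neq_0[of j] jm matrix_eqI[of "E j" 0] by auto
  have "E j *v w' = E j *v (E j *v w')" using E_mult_E_mult_vector jm by simp
  also have "\<dots> = 0" using \<mu> jm \<open>\<mu> (eigenvalue j) = 0\<close> by simp
  finally show False using w' by simp
qed

definition A_pow :: "nat \<Rightarrow> complex^'x \<Rightarrow> complex^'x" where
  "A_pow k v = ((*v) A ^^ k) v"

lemma A_pow_0 [simp]: "A_pow 0 v = v"
  and A_pow_Suc: "A_pow (Suc k) v = A *v A_pow k v"
  by (simp_all add: A_pow_def)

lemma A_pow_eq_sum_E: "A_pow k v = (\<Sum>j\<le>D. eigenvalue j ^ k *s (E j *v v))"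
proof (induction k)
  case 0
  show ?case using sum_E_mult_vector by simp
next
  case (Suc k)
  have "A_pow (Suc k) v = (\<Sum>j\<le>D. eigenvalue j ^ k *s (A *v (E j *v v)))"
    by (simp add: A_pow_Suc Suc vec.sum vec.scale del: One_nat_def)
  also have "\<dots> = (\<Sum>j\<le>D. eigenvalue j ^ Suc k *s (E j *v v))"
    by (intro sum.cong) (simp_all add: A_mult_E mult.commute del: One_nat_def)
  finally show ?case .
qed

lemma cinner_A_pow_left: "cinner (A_pow k v) w = cinner v (A_pow k w)"
proof (induction k arbitrary: v)
  case (Suc k)
  have "cinner (A *v u) w' = cinner u (A *v w')" for u w'
    by (simp add: cinner_adjoint_left del: One_nat_def)
  moreover have "A_pow (Suc k) v = A_pow k (A *v v)"
    by (induction k) (simp_all add: A_pow_Suc del: One_nat_def)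
  ultimately show ?case using Suc by (simp add: A_pow_Suc del: One_nat_def)
qed simp

section \<open>Terwilliger algebra\<close>

lemma adj_in_terwilliger: "adj R l \<in> T"
  by (cases "l \<le> D") (simp_all add: terwilliger.gen_A adj_eq_0 terwilliger_zero)

lemma E_in_terwilliger: "j \<le> D \<Longrightarrow> E j \<in> T"
  by (subst bose_mesner_coeffs_expand[OF bose_mesner_coeffs_E], assumption)
    (intro terwilliger_lincomb adj_in_terwilliger)

lemma Estar_in_terwilliger: "Es i \<in> T"
proof (cases "i \<le> D")
  case False
  then have "Es i = 0" by (simp add: Estar_def vec_eq_iff adj_eq_0)
  then show ?thesis using terwilliger_zero by simp
next
  case True
  obtain a where a: "adj R i = (\<chi> y z. \<Sum>j\<le>D. a j * E j $ y $ z)"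
    using bose_mesner_in_span_E[OF bose_mesner_coeffs_adj] by blast
  have "of_nat CARD('x) \<noteq> (0::complex)" by simp
  then have "Es i = (\<chi> y z. \<Sum>j\<le>D. (a j / of_nat CARD('x)) * Astar E j x $ y $ z)"
    by (simp add: vec_eq_iff Estar_def Astar_def a)
  also have "\<dots> \<in> T" by (intro terwilliger_lincomb terwilliger.gen_Astar)
  finally show ?thesis .
qed

lemma Astar_eq_lincomb_Estar:
  assumes "l \<le> D"
  shows "Astar E l x = (\<chi> y z. \<Sum>i\<le>D. (of_nat CARD('x) * E_coeffs l i) * Es i $ y $ z)"
  using bose_mesner_coeffs_E[OF assms]
  by (simp add: vec_eq_iff Astar_def Estar_def sum_adj_nth bose_mesner_coeffs_def)

lemma terwilliger_subsetI:
  assumes "\<And>M N. M \<in> S \<Longrightarrow> N \<in> S \<Longrightarrow> M + N \<in> S"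
    and "\<And>c M. M \<in> S \<Longrightarrow> map_matrix ((*) c) M \<in> S"
    and "\<And>M N. M \<in> S \<Longrightarrow> N \<in> S \<Longrightarrow> M ** N \<in> S"
    and "\<And>l. l \<le> D \<Longrightarrow> adj R l \<in> S"
    and "\<And>i. i \<le> D \<Longrightarrow> Es i \<in> S"
  shows "T \<subseteq> S"
proof
  fix F assume "F \<in> T"
  then show "F \<in> S"
  proof (induction rule: terwilliger.induct)
    case (gen_Astar l)
    then show ?case
      by (subst Astar_eq_lincomb_Estar) (auto intro: lincomb_mem_closed assms(1,2,5))
  next
    case (scale F c)
    then show ?case using assms(2) unfolding map_matrix_def by blast
  qed (use assms in blast)+
qed

lemma adjoint_matrix_Estar [simp]: "adjoint_matrix (Es i) = Es i"
  by (simp add: adjoint_matrix_def vec_eq_iff Estar_def adj_nth)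

lemma adjoint_matrix_in_terwilliger:
  assumes "F \<in> T" shows "adjoint_matrix F \<in> T"
proof -
  have "T \<subseteq> {F. adjoint_matrix F \<in> T}"
  proof (rule terwilliger_subsetI, unfold mem_Collect_eq)
    show "adjoint_matrix (M + N) \<in> T" if "adjoint_matrix M \<in> T" "adjoint_matrix N \<in> T" for M N
      using terwilliger.add[OF that] by (simp add: adjoint_matrix_add)
    show "adjoint_matrix (map_matrix ((*) c) M) \<in> T" if "adjoint_matrix M \<in> T" for c M
      using terwilliger_scale[OF that, of "cnj c"] by (simp add: adjoint_matrix_map_matrix)
    show "adjoint_matrix (M ** N) \<in> T" if "adjoint_matrix M \<in> T" "adjoint_matrix N \<in> T" for M N
      using terwilliger.mult[OF that(2,1)] by (simp add: adjoint_matrix_mult)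
  qed (simp_all add: adj_in_terwilliger Estar_in_terwilliger)
  then show ?thesis using assms by blast
qed

lemma is_module_terwilliger_if_invariant:
  assumes "vec.subspace K" "\<And>v. v \<in> K \<Longrightarrow> A *v v \<in> K" "\<And>i v. v \<in> K \<Longrightarrow> Es i *v v \<in> K"
  shows "is_module T K"
proof -
  have "T \<subseteq> {F. \<forall>v\<in>K. F *v v \<in> K}"
    by (rule terwilliger_subsetI)
      (use assms in \<open>auto simp: matrix_vector_mult_add_rdistrib matrix_vector_mult_map_matrix
         matrix_vector_mul_assoc[symmetric] vec.subspace_add vec.subspace_scale
         intro: A_polynomials_invariant[OF adj_in_A_polynomials]\<close>)
  then show ?thesis using assms(1) unfolding is_module_def by blast
qed

lemma Estar_mult_vector_nth: "(Es i *v v) $ y = (if R x y = i then v $ y else 0)"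
proof -
  have "(Es i *v v) $ y = (\<Sum>z\<in>UNIV. (if y = z then adj R i $ x $ y else 0) * v $ z)"
    by (simp add: matrix_vector_mult_def Estar_def)
  also have "\<dots> = (\<Sum>z\<in>UNIV. if z = y then adj R i $ x $ y * v $ y else 0)"
    by (rule sum.cong) auto
  finally show ?thesis by (simp add: adj_nth)
qed

lemma Estar_mult_Estar_mult_vector: "Es i *v (Es j *v v) = (if i = j then Es i *v v else 0)"
  by (simp add: vec_eq_iff Estar_mult_vector_nth)

lemma Estar_mult_vector_eq_0_iff: "Es i *v v = 0 \<longleftrightarrow> (\<forall>y. R x y = i \<longrightarrow> v $ y = 0)"
  by (auto simp: vec_eq_iff Estar_mult_vector_nth)

definition within_distance :: "nat \<Rightarrow> complex^'x \<Rightarrow> bool" where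
  "within_distance s v \<longleftrightarrow> (\<forall>y. s < R x y \<longrightarrow> v $ y = 0)"

lemma within_distance_Estar: "within_distance i (Es i *v v)"
  by (simp add: within_distance_def Estar_mult_vector_nth)

lemma Estar_eq_0_if_within_distance: "within_distance s v \<Longrightarrow> s < i \<Longrightarrow> Es i *v v = 0"
  by (auto simp: within_distance_def Estar_mult_vector_eq_0_iff)

lemma within_distance_A: 
  assumes "within_distance s v" shows "within_distance (Suc s) (A *v v)"
  unfolding within_distance_def
proof (intro allI impI)
  fix y assume y: "Suc s < R x y"
  have "s < R x w" if "R y w = 1" for w
    using R_triangle[of x y w] R_sym[of w y] that y by simp
  then have "(if R y w = 1 then 1 else 0) * v $ w = 0" for w
    using assms unfolding within_distance_def by simp
  then have "(\<Sum>w\<in>UNIV. (if R y w = 1 then 1 else 0) * v $ w) = 0"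
    by (intro sum.neutral) blast
  then show "(A *v v) $ y = 0" by (simp add: matrix_vector_mult_def adj_nth del: One_nat_def)
qed

lemma within_distance_A_pow: "within_distance s v \<Longrightarrow> within_distance (s + k) (A_pow k v)"
  by (induction k) (simp_all add: A_pow_Suc within_distance_A del: One_nat_def)

lemma sum_Estar_window:
  assumes "\<And>i. i < r \<Longrightarrow> Es i *v v = 0" "within_distance (r + l) v"
  shows "(\<Sum>m\<le>l. Es (r + m) *v v) = v"
proof -
  have "(\<Sum>m\<le>l. Es (r + m) *v v) $ y = v $ y" for y
  proof (cases "r \<le> R x y \<and> R x y \<le> r + l")
    case True
    then have "(\<Sum>m\<le>l. Es (r + m) *v v) $ y = (\<Sum>m\<le>l. if m = R x y - r then v $ y else 0)"
      unfolding sum_component Estar_mult_vector_nth by (intro sum.cong) auto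
    then show ?thesis using True by (auto simp: le_diff_conv)
  next
    case False
    then have "v $ y = 0"
      using assms Estar_mult_vector_eq_0_iff[of "R x y"] unfolding within_distance_def
      by (metis not_le)
    then show ?thesis by (simp add: sum_component Estar_mult_vector_nth sum.neutral)
  qed
  then show ?thesis by (simp add: vec_eq_iff)
qed

definition primary_module :: "(complex^'x) set" where
  "primary_module = vec.span ((\<lambda>l. adj R l *v xhat) ` {..D})"

lemma adj_mult_xhat_in_primary_module: "adj R l *v xhat \<in> primary_module"
  by (cases "l \<le> D") (simp_all add: primary_module_def vec.span_base vec.span_zero adj_eq_0)

lemma xhat_in_primary_module: "xhat \<in> primary_module"
  using adj_mult_xhat_in_primary_module[of 0] by (simp add: adj_0_eq_mat_1)

lemma Estar_mult_adj_mult_xhat: "Es i *v (adj R l *v xhat) = (if i = l then adj R l *v xhat else 0)"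
  by (auto simp: vec_eq_iff Estar_mult_vector_nth matrix_vector_mult_axis adj_nth R_sym)

lemma is_module_primary_module: "is_module T primary_module"
proof (rule is_module_terwilliger_if_invariant)
  show "vec.subspace primary_module" by (simp add: primary_module_def)
  have "A *v (adj R l *v xhat) \<in> primary_module" for l
  proof -
    have "A *v (adj R l *v xhat) = (\<Sum>m\<le>D. of_nat (intersection_number 1 l m) *s (adj R m *v xhat))"
      by (simp add: matrix_vector_mul_assoc bose_mesner_coeffs_adj_mult_adj
          bose_mesner_coeffs_mult_vector del: One_nat_def)
    also have "\<dots> \<in> primary_module"
      unfolding primary_module_def by (intro vec.span_sum vec.span_scale vec.span_base) auto
    finally show ?thesis .
  qed
  then show "A *v v \<in> primary_module" if "v \<in> primary_module" for v
    using that unfolding primary_module_def by (auto intro: matrix_vector_mult_span_closed)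
  show "Es i *v v \<in> primary_module" if "v \<in> primary_module" for i v
    using that adj_mult_xhat_in_primary_module unfolding primary_module_def
    by (auto intro: matrix_vector_mult_span_closed simp: Estar_mult_adj_mult_xhat vec.span_zero)
qed

lemma Estar_mult_primary_module:
  assumes "v \<in> primary_module" shows "\<exists>k. Es i *v v = k *s (adj R i *v xhat)"
proof -
  have "Es i *v v \<in> vec.span {adj R i *v xhat}"
    using assms unfolding primary_module_def
    by (auto intro: matrix_vector_mult_span_closed
        simp: Estar_mult_adj_mult_xhat vec.span_base vec.span_zero)
  then show ?thesis unfolding vec.span_singleton by auto
qed

lemma A_pow_in_module: "is_module T W \<Longrightarrow> w \<in> W \<Longrightarrow> A_pow k w \<in> W"
  by (induction k) (auto simp: A_pow_Suc intro: is_moduleD(2) adj_in_terwilliger)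

section \<open>Thin irreducible modules\<close>

text \<open>For \<open>w0 \<in> E\<^sup>*\<^sub>r W\<close>, the leading part of \<open>A\<^sup>j w0\<close> is its component in \<open>E\<^sup>*\<^sub>r\<^sub>+\<^sub>j W\<close>.
  By thinness it spans that level as long as it is nonzero; up to the first index \<open>level_count\<close>
  where it vanishes, the leading parts span a \<open>T\<close>-module, which by irreducibility is \<open>W\<close>.\<close>

context
  fixes W :: "(complex^'x) set" and r :: nat and w0 :: "complex^'x"
  assumes irreducible: "irreducible_module T W"
    and thin: "thin R x W"
    and below_endpoint: "\<And>i w. i < r \<Longrightarrow> w \<in> W \<Longrightarrow> Es i *v w = 0"
    and w0_in: "w0 \<in> W" and w0_level: "Es r *v w0 = w0" and w0_neq_0: "w0 \<noteq> 0"
begin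

definition leading_part :: "nat \<Rightarrow> complex^'x" where
  "leading_part j = Es (r + j) *v A_pow j w0"

definition level_count :: nat where
  "level_count = (LEAST d. leading_part d = 0)"

lemma A_pow_w0_in: "A_pow k w0 \<in> W"
  by (rule A_pow_in_module[OF irreducible_moduleD[OF irreducible] w0_in])

lemma sum_leading_levels: "(\<Sum>m\<le>k. Es (r + m) *v A_pow k w0) = A_pow k w0"
proof (rule sum_Estar_window)
  show "Es i *v A_pow k w0 = 0" if "i < r" for i using below_endpoint[OF that A_pow_w0_in] .
  show "within_distance (r + k) (A_pow k w0)"
    by (rule within_distance_A_pow) (metis w0_level within_distance_Estar)
qed

lemma leading_part_level_count: "leading_part level_count = 0"
  and leading_part_neq_0: "l < level_count \<Longrightarrow> leading_part l \<noteq> 0"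
proof -
  have "within_distance D v" for v
    unfolding within_distance_def using R_le_D leD by blast
  then have "leading_part (Suc D) = 0"
    unfolding leading_part_def by (intro Estar_eq_0_if_within_distance[of D]) auto
  then show "leading_part level_count = 0" "l < level_count \<Longrightarrow> leading_part l \<noteq> 0"
    unfolding level_count_def by (auto intro: LeastI dest: not_less_Least)
qed

lemma Estar_in_span_leading_part:
  assumes "l < level_count" "w \<in> W"
  shows "Es (r + l) *v w \<in> vec.span {leading_part l}"
  using thin leading_part_neq_0[OF assms(1)] A_pow_w0_in assms(2)
  unfolding thin_def leading_part_def by (intro dim_image_le_1_span) auto

lemma A_pow_in_span_leading_parts:
  assumes "j \<le> level_count"
  shows "A_pow j w0 \<in> vec.span (leading_part ` {..<level_count})"
proof -
  have "Es (r + m) *v A_pow j w0 \<in> vec.span (leading_part ` {..<level_count})" if "m \<le> j" for m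
  proof (cases "m < level_count")
    case True
    then have "vec.span {leading_part m} \<subseteq> vec.span (leading_part ` {..<level_count})"
      by (intro vec.span_mono) auto
    then show ?thesis using Estar_in_span_leading_part[OF True A_pow_w0_in] by blast
  next
    case False
    then have "m = level_count" "j = level_count" using that assms by auto
    then show ?thesis using leading_part_level_count by (simp add: leading_part_def vec.span_zero)
  qed
  then show ?thesis by (subst sum_leading_levels[symmetric]) (intro vec.span_sum, simp)
qed

text \<open>The leading parts arise from \<open>A\<^sup>j w0\<close> by a unitriangular change of basis.\<close>
lemma leading_part_in_span_A_pow:
  "l < level_count \<Longrightarrow> leading_part l \<in> vec.span ((\<lambda>k. A_pow k w0) ` {..l})"
proof (induction l rule: less_induct)
  case (less l)
  have lower: "Es (r + m) *v A_pow l w0 \<in> vec.span ((\<lambda>k. A_pow k w0) ` {..l})" if "m < l" for m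
  proof -
    have "vec.span {leading_part m} \<subseteq> vec.span ((\<lambda>k. A_pow k w0) ` {..m})"
      using less.IH[of m] that less.prems by (simp add: vec.span_minimal)
    also have "\<dots> \<subseteq> vec.span ((\<lambda>k. A_pow k w0) ` {..l})"
      using that by (intro vec.span_mono) auto
    finally show ?thesis
      using Estar_in_span_leading_part[of m, OF _ A_pow_w0_in] that less.prems by auto
  qed
  have "leading_part l = A_pow l w0 - (\<Sum>m<l. Es (r + m) *v A_pow l w0)"
    using sum_leading_levels[of l]
    by (simp add: lessThan_Suc_atMost[symmetric] leading_part_def eq_diff_eq add.commute)
  also have "\<dots> \<in> vec.span ((\<lambda>k. A_pow k w0) ` {..l})"
    by (rule vec.span_diff[OF vec.span_base vec.span_sum]) (simp_all add: lower)
  finally show ?case .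
qed

lemma is_module_span_leading_parts: "is_module T (vec.span (leading_part ` {..<level_count}))"
proof (rule is_module_terwilliger_if_invariant)
  have "A *v leading_part l \<in> vec.span (leading_part ` {..<level_count})" if "l < level_count" for l
  proof (rule matrix_vector_mult_span_closed[OF leading_part_in_span_A_pow[OF that]])
    show "A *v s \<in> vec.span (leading_part ` {..<level_count})"
      if "s \<in> (\<lambda>k. A_pow k w0) ` {..l}" for s
      using that \<open>l < level_count\<close> A_pow_in_span_leading_parts
      by (auto simp: A_pow_Suc[symmetric] simp del: One_nat_def)
  qed simp
  then show "A *v v \<in> vec.span (leading_part ` {..<level_count})"
    if "v \<in> vec.span (leading_part ` {..<level_count})" for v
    using that by (auto intro: matrix_vector_mult_span_closed)
  have "Es i *v leading_part l \<in> vec.span (leading_part ` {..<level_count})"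
    if "l < level_count" for i l
    using that by (simp add: leading_part_def Estar_mult_Estar_mult_vector vec.span_zero)
      (metis (no_types, lifting) image_eqI leading_part_def lessThan_iff vec.span_base)
  then show "Es i *v v \<in> vec.span (leading_part ` {..<level_count})"
    if "v \<in> vec.span (leading_part ` {..<level_count})" for i v
    using that by (auto intro: matrix_vector_mult_span_closed)
qed simp

lemma thin_module_subset_span_A_pow: "W \<subseteq> vec.span (range (\<lambda>k. A_pow k w0))"
proof -
  let ?V = "vec.span (leading_part ` {..<level_count})"
  have "?V \<subseteq> W"
    using is_moduleD[OF irreducible_moduleD[OF irreducible]] A_pow_w0_in Estar_in_terwilliger
    by (intro vec.span_minimal) (auto simp: leading_part_def)
  moreover have "w0 \<in> ?V" using A_pow_in_span_leading_parts[of 0] by simp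
  ultimately have "?V = W"
    using irreducible is_module_span_leading_parts w0_neq_0
    unfolding irreducible_module_def by blast
  moreover have "leading_part l \<in> vec.span (range (\<lambda>k. A_pow k w0))" if "l < level_count" for l
    using leading_part_in_span_A_pow[OF that] vec.span_mono[OF image_mono[OF subset_UNIV]] by blast
  then have "?V \<subseteq> vec.span (range (\<lambda>k. A_pow k w0))"
    by (intro vec.span_minimal) auto
  ultimately show ?thesis by simp
qed

end

section \<open>Codes and thin modules\<close>

lemma cinner_A_pow_eq_0_if_low_powers:
  assumes S: "S \<subseteq> {..D}" and outside: "\<And>j. j \<le> D \<Longrightarrow> j \<notin> S \<Longrightarrow> E j *v u = 0"
    and low: "\<And>k. k < card S \<Longrightarrow> cinner (A_pow k w) u = 0"
  shows "cinner (A_pow k w) u = 0"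
proof -
  have expand: "cinner (A_pow k w) u = (\<Sum>j\<in>S. eigenvalue j ^ k * cinner w (E j *v u))" for k
  proof -
    have "cinner (A_pow k w) u = (\<Sum>j\<le>D. eigenvalue j ^ k * cinner w (E j *v u))"
      unfolding cinner_A_pow_left[of k w u] A_pow_eq_sum_E[of k u] cinner_sum_right
        cinner_scale_right ..
    also have "\<dots> = (\<Sum>j\<in>S. eigenvalue j ^ k * cinner w (E j *v u))"
      using S outside by (intro sum.mono_neutral_right) auto
    finally show ?thesis .
  qed
  have "cinner w (E j *v u) = 0" if "j \<in> S" for j
  proof (rule power_sums_vanish_imp_eq_0[where c = "\<lambda>j. cinner w (E j *v u)"])
    show "(\<Sum>j\<in>S. eigenvalue j ^ k * cinner w (E j *v u)) = 0" if "k < card S" for k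
      using low[OF that] expand by simp
  qed (use S inj_on_subset[OF inj_on_eigenvalue] finite_subset that in auto)
  then show ?thesis unfolding expand by simp
qed

lemma below_endpoint:
  assumes "i < endpoint R x W" "w \<in> W" shows "Es i *v w = 0"
  using not_less_Least[OF assms(1)[unfolded endpoint_def]] assms(2) by blast

lemma endpoint_vector_exists:
  assumes "irreducible_module T W"
  obtains w0 where "w0 \<in> W" "Es (endpoint R x W) *v w0 = w0" "w0 \<noteq> 0"
proof -
  have "0 \<in> W" "W \<noteq> {0}"
    using assms vec.subspace_0 unfolding irreducible_module_def is_module_def by auto
  then obtain w where "w \<in> W" "w \<noteq> 0" by blast
  then obtain y where w: "w \<in> W" "w $ y \<noteq> 0" by (metis vec_eq_iff zero_index)
  then have "Es (R x y) *v w \<noteq> 0" by (auto simp: vec_eq_iff Estar_mult_vector_nth)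
  then have "\<exists>w\<in>W. Es (endpoint R x W) *v w \<noteq> 0"
    using w(1) unfolding endpoint_def by (rule LeastI[of _ "R x y", OF bexI])
  then obtain w1 where "w1 \<in> W" "Es (endpoint R x W) *v w1 \<noteq> 0" by blast
  moreover have "Es (endpoint R x W) *v w1 \<in> W"
    using is_moduleD(2)[OF irreducible_moduleD[OF assms] Estar_in_terwilliger \<open>w1 \<in> W\<close>] .
  ultimately show ?thesis using that by (simp add: Estar_mult_Estar_mult_vector)
qed

lemma one_le_endpoint:
  assumes "irreducible_module T W" "\<And>w. w \<in> W \<Longrightarrow> w $ x = 0"
  shows "1 \<le> endpoint R x W"
proof (rule ccontr)
  assume "\<not> 1 \<le> endpoint R x W"
  then obtain w0 where "w0 \<in> W" "Es 0 *v w0 = w0" "w0 \<noteq> 0"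
    using endpoint_vector_exists[OF assms(1)] by (metis less_one not_le)
  then show False using assms(2) by (metis Estar_mult_vector_eq_0_iff R_eq_0_iff)
qed

lemma below_delta:
  assumes "1 \<le> i" "i < delta R x v" shows "Es i *v v = 0"
  using not_less_Least[OF assms(2)[unfolded delta_def]] assms(1) by auto

lemma cinner_eq_0_if_within_distance:
  assumes "within_distance s w" "\<And>y. R x y \<le> s \<Longrightarrow> u $ y = 0"
  shows "cinner w u = 0"
  using assms unfolding cinner_def within_distance_def by (intro sum.neutral) (metis mult_zero_left
    mult_zero_right complex_cnj_zero not_le)

lemma orthogonal_thin_module:
  assumes irreducible: "irreducible_module T W" and thin: "thin R x W"
    and endpoint: "1 \<le> endpoint R x W"
    and bound: "card {j \<in> dual_support D E W. E j *v v \<noteq> 0} + endpoint R x W \<le> delta R x v"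
    and w: "w \<in> W"
  shows "cinner w v = 0"
proof -
  let ?r = "endpoint R x W" and ?S = "{j \<in> dual_support D E W. E j *v v \<noteq> 0}"
  note module = irreducible_moduleD[OF irreducible]
  obtain w0 where w0: "w0 \<in> W" "Es ?r *v w0 = w0" "w0 \<noteq> 0"
    using endpoint_vector_exists[OF irreducible] .
  obtain u z where u: "u \<in> W" and z: "\<And>w. w \<in> W \<Longrightarrow> cinner w z = 0" and v: "v = u + z"
    using orthogonal_decomposition[OF is_moduleD(1)[OF module], of v] by blast
  have annihilated: "G *v u = 0" if "G \<in> T" "G *v v = 0" for G
    using module_component_annihilated[OF adjoint_matrix_in_terwilliger module u z] that v by blast
  have near: "u $ y = 0" if "R x y < delta R x v" for y
  proof -
    have "Es (R x y) *v u = 0"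
    proof (cases "R x y = 0")
      case True
      then show ?thesis using below_endpoint[OF _ u] endpoint by simp
    next
      case False
      then show ?thesis using annihilated[OF Estar_in_terwilliger below_delta] that by simp
    qed
    then show ?thesis by (simp add: Estar_mult_vector_eq_0_iff)
  qed
  have outside: "E j *v u = 0" if "j \<le> D" "j \<notin> ?S" for j
    using that u annihilated[OF E_in_terwilliger] unfolding dual_support_def by blast
  have low: "cinner (A_pow k w0) u = 0" if "k < card ?S" for k
  proof (rule cinner_eq_0_if_within_distance)
    show "within_distance (?r + k) (A_pow k w0)"
      by (rule within_distance_A_pow) (metis w0(2) within_distance_Estar)
    show "u $ y = 0" if "R x y \<le> ?r + k" for y
      using near that \<open>k < card ?S\<close> bound by simp
  qed
  have "cinner (A_pow k w0) u = 0" for k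
    by (rule cinner_A_pow_eq_0_if_low_powers[OF _ outside low]) (auto simp: dual_support_def)
  then have "cinner u u = 0"
    using thin_module_subset_span_A_pow[OF irreducible thin below_endpoint[of _ W] w0] u
    by (intro cinner_span_eq_0[of u "range (\<lambda>k. A_pow k w0)"]) auto
  then show ?thesis using z[OF w] v by (simp add: cinner_self_eq_0)
qed

lemma is_module_cyclic: "is_module T {G *v c | G. G \<in> T}"
  unfolding is_module_def vec.subspace_def
proof (intro conjI ballI allI impI)
  show "0 \<in> {G *v c | G. G \<in> T}" using terwilliger_zero by force
  show "v + w \<in> {G *v c | G. G \<in> T}" if "v \<in> {G *v c | G. G \<in> T}" "w \<in> {G *v c | G. G \<in> T}" for v w
    using that terwilliger.add by (force simp: matrix_vector_mult_add_rdistrib)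
  show "a *s v \<in> {G *v c | G. G \<in> T}" if "v \<in> {G *v c | G. G \<in> T}" for a v
    using that terwilliger_scale by (force simp: matrix_vector_mult_map_matrix)
  show "F *v v \<in> {G *v c | G. G \<in> T}" if "F \<in> T" "v \<in> {G *v c | G. G \<in> T}" for F v
    using that terwilliger.mult by (force simp: matrix_vector_mul_assoc)
qed

lemma cinner_axis_left: "cinner xhat w = w $ x"
proof -
  have "cinner xhat w = (\<Sum>y\<in>UNIV. if y = x then w $ y else 0)"
    unfolding cinner_def by (intro sum.cong) (auto simp: axis_def)
  then show ?thesis by simp
qed

lemma Estar_nonprimary_part_eq_0:
  assumes bound: "\<And>W. irreducible_module T W \<Longrightarrow> 1 \<le> endpoint R x W \<Longrightarrow> endpoint R x W \<le> t \<Longrightarrow>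
                  int (card {j \<in> dual_support D E W. E j *v v \<noteq> 0})
                    \<le> int (delta R x v) - int (endpoint R x W)"
    and thin: "\<And>W. irreducible_module T W \<Longrightarrow> endpoint R x W \<le> t \<Longrightarrow> thin R x W"
    and p: "p \<in> primary_module" and c: "\<And>q. q \<in> primary_module \<Longrightarrow> cinner q c = 0"
    and v: "v = p + c"
    and F: "F \<in> T" and i: "1 \<le> i" "i \<le> t"
  shows "Es i *v (F *v c) = 0"
proof (rule ccontr)
  assume "Es i *v (F *v c) \<noteq> 0"
  then obtain W where irreducible: "irreducible_module T W"
    and WN: "W \<subseteq> {G *v c | G. G \<in> T}" and met: "\<exists>w\<in>W. Es i *v w \<noteq> 0"
    using exists_irreducible_submodule[OF adjoint_matrix_in_terwilliger is_module_cyclic] F by blast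
  have primary_orthogonal: "cinner q w = 0" if q: "q \<in> primary_module" and w: "w \<in> W" for q w
  proof -
    obtain G where "G \<in> T" "w = G *v c" using WN w by blast
    then show ?thesis
      using c is_moduleD(2)[OF is_module_primary_module adjoint_matrix_in_terwilliger] q
      by (simp add: cinner_adjoint_right)
  qed
  have "endpoint R x W \<le> i"
    using met unfolding endpoint_def by (blast intro: Least_le)
  moreover have "1 \<le> endpoint R x W"
    using primary_orthogonal[OF xhat_in_primary_module] irreducible
    by (intro one_le_endpoint) (simp_all add: cinner_axis_left)
  ultimately have r: "1 \<le> endpoint R x W" "endpoint R x W \<le> t" using i by simp_all
  have "card {j \<in> dual_support D E W. E j *v v \<noteq> 0} + endpoint R x W \<le> delta R x v"
    using bound[OF irreducible r] by linarith
  then have orthogonal_v: "cinner w v = 0" if "w \<in> W" for w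
    using orthogonal_thin_module[OF irreducible thin[OF irreducible r(2)] r(1) _ that] by simp
  have "cinner w c = 0" if "w \<in> W" for w
  proof -
    have "cinner w p = 0" using primary_orthogonal[OF p that] cinner_commute[of w p] by simp
    then show ?thesis using orthogonal_v[OF that] v by (simp add: cinner_add_right)
  qed
  then have "w = 0" if "w \<in> W" for w
    using that WN is_moduleD(2)[OF _ adjoint_matrix_in_terwilliger] irreducible
    by (auto simp: cinner_adjoint_right cinner_self_eq_0[symmetric] irreducible_module_def)
  then show False using met by (metis matrix_vector_mult_0_right)
qed

end

theorem corollary3p5:
  fixes R :: "'x::finite \<Rightarrow> 'x \<Rightarrow> nat" and D t :: nat
    and E :: "nat \<Rightarrow> complex^'x^'x" and x :: 'x and code_vec :: "complex^'x"
  assumes scheme: "sym_assoc_scheme R D"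
    and metric: "metric_scheme R"
    and idem: "primitive_idempotents R D E"
    and code: "is_code R E code_vec"
    and t: "1 \<le> t" "t \<le> D"
    and bound: "\<And>W. irreducible_module (terwilliger R D E x) W \<Longrightarrow>
                  1 \<le> endpoint R x W \<Longrightarrow> endpoint R x W \<le> t \<Longrightarrow>
                  int (card {j \<in> dual_support D E W. E j *v code_vec \<noteq> 0})
                    \<le> int (delta R x code_vec) - int (endpoint R x W)"
    and thin: "\<And>W. irreducible_module (terwilliger R D E x) W \<Longrightarrow>
                  endpoint R x W \<le> t \<Longrightarrow> thin R x W"
  shows "\<forall>F \<in> terwilliger R D E x. rel_codesign R t x (F *v code_vec)"
proof -
  interpret based_metric_scheme R D E x
    using scheme metric idem by unfold_locales
  obtain p c where p: "p \<in> primary_module" and c: "\<And>q. q \<in> primary_module \<Longrightarrow> cinner q c = 0"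
    and split: "code_vec = p + c"
    using orthogonal_decomposition[OF is_moduleD(1)[OF is_module_primary_module]] by blast
  show ?thesis
    unfolding rel_codesign_def
  proof (intro ballI allI impI)
    fix F i assume F: "F \<in> T" and i: "1 \<le> i \<and> i \<le> t"
    have "Es i *v (F *v code_vec) = Es i *v (F *v p)"
      using Estar_nonprimary_part_eq_0[OF bound thin p c split F] i
      by (simp add: split matrix_vector_right_distrib)
    moreover obtain k where "Es i *v (F *v p) = k *s (adj R i *v xhat)"
      using Estar_mult_primary_module is_moduleD(2)[OF is_module_primary_module F p] by blast
    ultimately have "1 *s (Es i *v (F *v code_vec)) + (- k) *s (adj R i *v xhat) = 0"
      by (simp add: vec_eq_iff)
    then show "\<exists>a b. (a \<noteq> 0 \<or> b \<noteq> 0) \<and> a *s (Es i *v (F *v code_vec)) + b *s (adj R i *v xhat) = 0"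
      by (intro exI[of _ 1] exI[of _ "- k"]) simp
  qed
qed

end
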